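(* For any $t\in[T]$ and $k,n,m\in[N]$, $$\Pr(x_o=n,\;x_t=m\mid x_{T+1}=k)=q^{(k)}_tP_{n,m}\mu_m+(1-q^{(k)}_t)\mu_n\mu_m.$$
   Context: Let $N,T$ be positive integers. Let $\mathbf{P}\in\mathbb{R}^{N\times N}$ have nonnegative entries with columns summing to $1$, and let $\boldsymbol\mu\in\mathbb{R}^N$ be a probability vector with $\mathbf{P}\boldsymbol\mu=\boldsymbol\mu$. Let $\mathbf{q}^{(1)},\dots,\mathbf{q}^{(N)}$ be probability vectors in $\mathbb{R}^T$. Random variables: $x_1,\dots,x_{T+1}$ i.i.d. with law $\boldsymbol\mu$ on $[N]$, and $x_o\in[N]$ with $\Pr(x_o=n\mid x_{T+1}=k,x_1,\dots,x_T)=\sum_{s=1}^Tq^{(k)}_sP_{n,x_s}$. *)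

theory Defs
  imports Main "HOL-Library.FuncSet" Complex_Main
begin

text \<open>States are indexed by [N] = {1..N}, positions by {1..T+1}.
  A realisation of (x_1,...,x_{T+1}) is a function x in PiE {1..T+1} (\<lambda>_. {1..N}).
  mu n = mu_n, P n m = P_{n,m}, q k s = q^{(k)}_s.
  The joint probability of (x_1,...,x_{T+1}) = x and x_o = n is
  prod_{s=1}^{T+1} mu(x_s) * sum_{s=1}^T q^{(x_{T+1})}_s P_{n,x_s}.\<close>

definition joint_weight ::
  "nat \<Rightarrow> (nat \<Rightarrow> real) \<Rightarrow> (nat \<Rightarrow> nat \<Rightarrow> real) \<Rightarrow> (nat \<Rightarrow> nat \<Rightarrow> real)
   \<Rightarrow> (nat \<Rightarrow> nat) \<Rightarrow> nat \<Rightarrow> real" where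
  "joint_weight T mu P q x n =
     (\<Prod>s\<in>{1..Suc T}. mu (x s)) * (\<Sum>s\<in>{1..T}. q (x (Suc T)) s * P n (x s))"

definition model_prob ::
  "nat \<Rightarrow> nat \<Rightarrow> (nat \<Rightarrow> real) \<Rightarrow> (nat \<Rightarrow> nat \<Rightarrow> real) \<Rightarrow> (nat \<Rightarrow> nat \<Rightarrow> real)
   \<Rightarrow> ((nat \<Rightarrow> nat) \<Rightarrow> nat \<Rightarrow> bool) \<Rightarrow> real" where
  "model_prob N T mu P q E =
     (\<Sum>x\<in>PiE {1..Suc T} (\<lambda>_. {1..N}). \<Sum>n\<in>{1..N}.
        if E x n then joint_weight T mu P q x n else 0)"

definition cond_prob ::
  "nat \<Rightarrow> nat \<Rightarrow> (nat \<Rightarrow> real) \<Rightarrow> (nat \<Rightarrow> nat \<Rightarrow> real) \<Rightarrow> (nat \<Rightarrow> nat \<Rightarrow> real)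
   \<Rightarrow> ((nat \<Rightarrow> nat) \<Rightarrow> nat \<Rightarrow> bool) \<Rightarrow> ((nat \<Rightarrow> nat) \<Rightarrow> nat \<Rightarrow> bool) \<Rightarrow> real" where
  "cond_prob N T mu P q E F =
     model_prob N T mu P q (\<lambda>x n. E x n \<and> F x n) / model_prob N T mu P q F"

end

theory Submission
  imports Defs
begin

text \<open>Summing the joint weight over the unobserved coordinates is an expectation under the
  i.i.d. law of x_1, ..., x_{T+1}. Given x_{T+1} = k, the output x_o is drawn from column x_s
  of P with probability q^{(k)}_s. The term s = t contributes P_{n,m} mu_m; for s \<noteq> t the
  coordinates x_s and x_t are independent, and stationarity of mu turns that term into
  mu_n mu_m.\<close>

lemma sum_mult_if_eq:
  fixes w :: "'a \<Rightarrow> 'b::comm_ring"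
  assumes "finite S" "t \<in> S"
  shows "(\<Sum>s\<in>S. w s * (if s = t then a else b)) = w t * a + (sum w S - w t) * b"
proof -
  have "(\<Sum>s\<in>S. w s * (if s = t then a else b)) = w t * a + (\<Sum>s\<in>S - {t}. w s * b)"
    using assms by (simp add: sum.remove[of S t])
  also have "\<dots> = w t * a + (sum w S - w t) * b"
    using assms by (simp add: sum_distrib_right sum_diff1 left_diff_distrib)
  finally show ?thesis .
qed

lemma sum_mult_of_bool_eq_point:
  fixes f g :: "'a \<Rightarrow> 'b::comm_semiring_1"
  assumes "finite A" "c \<in> A"
  shows "(\<Sum>a\<in>A. f a * (of_bool (a = c) * g a)) = f c * g c"
  using assms by (simp add: mult.commute[of "of_bool _"] mult.assoc[symmetric])

definition iid_expect :: "'i set \<Rightarrow> 'a set \<Rightarrow> ('a \<Rightarrow> real) \<Rightarrow> (('i \<Rightarrow> 'a) \<Rightarrow> real) \<Rightarrow> real"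
  where "iid_expect I A mu F = (\<Sum>x\<in>PiE I (\<lambda>_. A). (\<Prod>i\<in>I. mu (x i)) * F x)"

lemma iid_expect_cong:
  "(\<And>x. x \<in> PiE I (\<lambda>_. A) \<Longrightarrow> F x = G x) \<Longrightarrow> iid_expect I A mu F = iid_expect I A mu G"
  unfolding iid_expect_def by (auto intro: sum.cong)

lemma iid_expect_cmult: "iid_expect I A mu (\<lambda>x. c * F x) = c * iid_expect I A mu F"
  unfolding iid_expect_def by (simp add: sum_distrib_left algebra_simps)

lemma iid_expect_sum:
  "iid_expect I A mu (\<lambda>x. \<Sum>s\<in>S. F s x) = (\<Sum>s\<in>S. iid_expect I A mu (F s))"
  unfolding iid_expect_def by (simp add: sum_distrib_left sum.swap[of _ S])

lemma iid_expect_prod: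
  assumes "finite I" "finite A" "J \<subseteq> I" and mu_sum: "(\<Sum>a\<in>A. mu a) = 1"
  shows "iid_expect I A mu (\<lambda>x. \<Prod>j\<in>J. g j (x j)) = (\<Prod>j\<in>J. \<Sum>a\<in>A. mu a * g j a)"
proof -
  let ?g = "\<lambda>j a. mu a * (if j \<in> J then g j a else 1)"
  have restrict: "(\<Prod>j\<in>I. if j \<in> J then f j else 1) = prod f J" for f :: "_ \<Rightarrow> real"
    using prod.inter_restrict[OF \<open>finite I\<close>, of f J] \<open>J \<subseteq> I\<close> by (simp add: Int_absorb1)
  have "iid_expect I A mu (\<lambda>x. \<Prod>j\<in>J. g j (x j)) = (\<Sum>x\<in>PiE I (\<lambda>_. A). \<Prod>j\<in>I. ?g j (x j))"
    unfolding iid_expect_def by (simp add: prod.distrib restrict)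
  also have "\<dots> = (\<Prod>j\<in>I. \<Sum>a\<in>A. ?g j a)"
    using assms by (simp add: prod_sum_PiE)
  also have "\<dots> = (\<Prod>j\<in>J. \<Sum>a\<in>A. mu a * g j a)"
    unfolding restrict[symmetric] using mu_sum by (intro prod.cong) auto
  finally show ?thesis .
qed

lemma model_prob_eq_iid_expect:
  "model_prob N T mu P q E = iid_expect {1..Suc T} {1..N} mu
     (\<lambda>x. \<Sum>n\<in>{1..N}. of_bool (E x n) * (\<Sum>s\<in>{1..T}. q (x (Suc T)) s * P n (x s)))"
  unfolding model_prob_def iid_expect_def joint_weight_def sum_distrib_left[of _ _ "{1..N}"]
  by (intro sum.cong refl) simp

lemma model_prob_last_state:
  assumes P_col: "\<And>j. j \<in> {1..N} \<Longrightarrow> (\<Sum>i\<in>{1..N}. P i j) = 1"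
    and mu_sum: "(\<Sum>i\<in>{1..N}. mu i) = 1"
    and q_sum: "(\<Sum>s\<in>{1..T}. q k s) = 1" and k: "k \<in> {1..N}"
  shows "model_prob N T mu P q (\<lambda>x o'. x (Suc T) = k) = mu k"
proof -
  let ?A = "{1..N}"
  have "model_prob N T mu P q (\<lambda>x o'. x (Suc T) = k)
      = iid_expect {1..Suc T} ?A mu (\<lambda>x. \<Prod>j\<in>{Suc T}. of_bool (x j = k))"
    unfolding model_prob_eq_iid_expect
  proof (rule iid_expect_cong)
    fix x assume "x \<in> PiE {1..Suc T} (\<lambda>_. ?A)"
    then have x_s: "x s \<in> ?A" if "s \<in> {1..T}" for s
      using that by (auto simp: PiE_iff)
    show "(\<Sum>n\<in>?A. of_bool (x (Suc T) = k) * (\<Sum>s\<in>{1..T}. q (x (Suc T)) s * P n (x s)))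
        = (\<Prod>j\<in>{Suc T}. of_bool (x j = k))"
    proof (cases "x (Suc T) = k")
      case True
      have "(\<Sum>n\<in>?A. \<Sum>s\<in>{1..T}. q k s * P n (x s)) = (\<Sum>s\<in>{1..T}. q k s * (\<Sum>n\<in>?A. P n (x s)))"
        unfolding sum_distrib_left by (rule sum.swap)
      also have "\<dots> = 1"
        using x_s P_col q_sum by simp
      finally show ?thesis using True by simp
    qed simp
  qed
  also have "\<dots> = mu k"
    using iid_expect_prod[of _ ?A "{Suc T}" mu "\<lambda>_ a. of_bool (a = k)"] mu_sum k by simp
  finally show ?thesis .
qed

lemma iid_expect_indicators_mult_P:
  fixes N T :: nat and mu :: "nat \<Rightarrow> real" and P :: "nat \<Rightarrow> nat \<Rightarrow> real"
  assumes mu_sum: "(\<Sum>i\<in>{1..N}. mu i) = 1"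
    and stationary: "(\<Sum>j\<in>{1..N}. P n j * mu j) = mu n"
    and s: "s \<in> {1..T}" and t: "t \<in> {1..T}" and k: "k \<in> {1..N}" and m: "m \<in> {1..N}"
  shows "iid_expect {1..Suc T} {1..N} mu (\<lambda>x. of_bool (x (Suc T) = k) * of_bool (x t = m) * P n (x s))
      = mu k * mu m * (if s = t then P n m else mu n)"
proof -
  let ?E = "iid_expect {1..Suc T} {1..N} mu"
  define g where "g j a = (if j = Suc T then of_bool (a = k)
      else if j = t then of_bool (a = m) * (if s = t then P n a else 1) else P n a)" for j a
  have "?E (\<lambda>x. of_bool (x (Suc T) = k) * of_bool (x t = m) * P n (x s))
      = ?E (\<lambda>x. \<Prod>j\<in>{Suc T, t, s}. g j (x j))"
    using s t by (intro iid_expect_cong) (cases "s = t"; auto simp: g_def)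
  also have "\<dots> = (\<Prod>j\<in>{Suc T, t, s}. \<Sum>a\<in>{1..N}. mu a * g j a)"
    using s t mu_sum by (intro iid_expect_prod) auto
  also have "\<dots> = mu k * mu m * (if s = t then P n m else mu n)"
    using s t k m stationary sum_mult_of_bool_eq_point[OF _ m, of mu]
    by (cases "s = t") (auto simp: g_def mult.commute)
  finally show ?thesis .
qed

lemma model_prob_out_state_last_state:
  assumes mu_sum: "(\<Sum>i\<in>{1..N}. mu i) = 1"
    and stationary: "(\<Sum>j\<in>{1..N}. P n j * mu j) = mu n"
    and q_sum: "(\<Sum>s\<in>{1..T}. q k s) = 1"
    and t: "t \<in> {1..T}" and k: "k \<in> {1..N}" and n: "n \<in> {1..N}" and m: "m \<in> {1..N}"
  shows "model_prob N T mu P q (\<lambda>x o'. (o' = n \<and> x t = m) \<and> x (Suc T) = k)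
      = mu k * (q k t * P n m * mu m + (1 - q k t) * mu n * mu m)"
proof -
  let ?E = "iid_expect {1..Suc T} {1..N} mu"
  let ?f = "\<lambda>s x. of_bool (x (Suc T) = k) * of_bool (x t = m) * P n (x s)"
  have "model_prob N T mu P q (\<lambda>x o'. (o' = n \<and> x t = m) \<and> x (Suc T) = k)
      = ?E (\<lambda>x. \<Sum>s\<in>{1..T}. q k s * ?f s x)"
    unfolding model_prob_eq_iid_expect
  proof (rule iid_expect_cong)
    fix x
    show "(\<Sum>n'\<in>{1..N}. of_bool ((n' = n \<and> x t = m) \<and> x (Suc T) = k)
            * (\<Sum>s\<in>{1..T}. q (x (Suc T)) s * P n' (x s)))
        = (\<Sum>s\<in>{1..T}. q k s * ?f s x)"
      using n by (cases "x t = m \<and> x (Suc T) = k") auto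
  qed
  also have "\<dots> = (\<Sum>s\<in>{1..T}. q k s * (mu k * mu m * (if s = t then P n m else mu n)))"
    unfolding iid_expect_sum iid_expect_cmult
    by (rule sum.cong[OF refl]) (simp only: iid_expect_indicators_mult_P[where N = N and T = T and mu = mu and P = P and n = n, OF mu_sum stationary _ t k m])
  also have "\<dots> = mu k * mu m * (\<Sum>s\<in>{1..T}. q k s * (if s = t then P n m else mu n))"
    unfolding sum_distrib_left by (intro sum.cong refl) (simp add: ac_simps)
  also have "(\<Sum>s\<in>{1..T}. q k s * (if s = t then P n m else mu n)) = q k t * P n m + (1 - q k t) * mu n"
    using sum_mult_if_eq[of "{1..T}" t "q k"] t q_sum by simp
  finally show ?thesis by (simp add: algebra_simps)
qed

theorem lemmaB1:
  fixes N T :: nat and mu :: "nat \<Rightarrow> real" and P q :: "nat \<Rightarrow> nat \<Rightarrow> real"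
    and t k n m :: nat
  assumes "N \<ge> 1" and "T \<ge> 1"
    and P_nonneg: "\<And>i j. i \<in> {1..N} \<Longrightarrow> j \<in> {1..N} \<Longrightarrow> P i j \<ge> 0"
    and P_col: "\<And>j. j \<in> {1..N} \<Longrightarrow> (\<Sum>i\<in>{1..N}. P i j) = 1"
    and mu_nonneg: "\<And>i. i \<in> {1..N} \<Longrightarrow> mu i \<ge> 0"
    and mu_sum: "(\<Sum>i\<in>{1..N}. mu i) = 1"
    and stationary: "\<And>i. i \<in> {1..N} \<Longrightarrow> (\<Sum>j\<in>{1..N}. P i j * mu j) = mu i"
    and q_nonneg: "\<And>j s. j \<in> {1..N} \<Longrightarrow> s \<in> {1..T} \<Longrightarrow> q j s \<ge> 0"
    and q_sum: "\<And>j. j \<in> {1..N} \<Longrightarrow> (\<Sum>s\<in>{1..T}. q j s) = 1"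
    and t: "t \<in> {1..T}" and k: "k \<in> {1..N}" and n: "n \<in> {1..N}" and m: "m \<in> {1..N}"
    and mu_k_pos: "mu k > 0"
  shows "cond_prob N T mu P q (\<lambda>x o'. o' = n \<and> x t = m) (\<lambda>x o'. x (Suc T) = k)
           = q k t * P n m * mu m + (1 - q k t) * mu n * mu m"
proof -
  \<comment> \<open>The identity is purely algebraic.\<close>
  have "model_prob N T mu P q (\<lambda>x o'. x (Suc T) = k) = mu k"
    using P_col mu_sum q_sum[OF k] k by (rule model_prob_last_state)
  moreover have "model_prob N T mu P q (\<lambda>x o'. (o' = n \<and> x t = m) \<and> x (Suc T) = k)
      = mu k * (q k t * P n m * mu m + (1 - q k t) * mu n * mu m)"
    using mu_sum stationary[OF n] q_sum[OF k] t k n m by (rule model_prob_out_state_last_state)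
  ultimately show ?thesis
    unfolding cond_prob_def using mu_k_pos by simp
qed

end
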